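(* Let $z(n)=\frac{1}{n+1}$, $n\in\mathbb{Z}_+$. For every finite sequence $\alpha$, the limit $\lim_{t\to\infty}t\mu(t,z\otimes\alpha)$ exists and equals $\|\alpha\|_1$.
   Context: For sequences $\alpha,\beta$, the tensor product is the double sequence $(\alpha\otimes\beta)(k,l)=\alpha(k)\beta(l)$. For a double sequence (a function on a countable set with counting measure) $x$ tending to zero, $\mu(t,x)$ denotes its decreasing rearrangement, i.e. the non-increasing step function on $(0,\infty)$ equidistributed with $|x|$. $\|\alpha\|_1=\sum_k|\alpha(k)|$. *)

theory Defs
  imports "HOL-Analysis.Analysis"
begin

definition z :: "nat \<Rightarrow> complex" where
  "z n = complex_of_real (1 / (real n + 1))"

definition tensor :: "(nat \<Rightarrow> complex) \<Rightarrow> (nat \<Rightarrow> complex) \<Rightarrow> (nat \<times> nat \<Rightarrow> complex)" where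
  "tensor a b = (\<lambda>(k, l). a k * b l)"

text \<open>Distribution function w.r.t. counting measure: number of indices with |x i| > s
  (only meaningful when this set is finite).\<close>
definition distr :: "('i \<Rightarrow> complex) \<Rightarrow> real \<Rightarrow> nat" where
  "distr x s = card {i. norm (x i) > s}"

definition mu :: "real \<Rightarrow> ('i \<Rightarrow> complex) \<Rightarrow> real" where
  "mu t x = Inf {s. 0 \<le> s \<and> finite {i. norm (x i) > s} \<and> real (distr x s) \<le> t}"

definition l1norm :: "(nat \<Rightarrow> complex) \<Rightarrow> real" where
  "l1norm a = (\<Sum>k. norm (a k))"

end

theory Submission
  imports Defs
begin

text \<open>Write \<open>F\<close> for the support of \<open>\<alpha>\<close>, \<open>m = card F\<close> and \<open>A = \<parallel>\<alpha>\<parallel>\<^sub>1\<close>. For \<open>s > 0\<close> the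
  entries of \<open>z \<otimes> \<alpha>\<close> exceeding \<open>s\<close> in column \<open>l \<in> F\<close> are those with \<open>k + 1 < \<bar>\<alpha> l\<bar> / s\<close>,
  so their number lies between \<open>\<bar>\<alpha> l\<bar> / s - 1\<close> and \<open>\<bar>\<alpha> l\<bar> / s\<close>. Summing over \<open>F\<close> traps the
  distribution function between \<open>A / s - m\<close> and \<open>A / s\<close>, hence
  \<open>A / (t + m) \<le> \<mu>(t, z \<otimes> \<alpha>) \<le> A / t\<close>, and \<open>t \<mu>(t, z \<otimes> \<alpha>) \<rightarrow> A\<close> by the sandwich rule.\<close>

lemma mu_le:
  assumes "0 \<le> s" "finite {i. norm (x i) > s}" "real (distr x s) \<le> t"
  shows "mu t x \<le> s"
  unfolding mu_def by (rule cInf_lower) (use assms in \<open>auto intro: bdd_belowI[of _ 0]\<close>)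

lemma le_mu:
  assumes "0 \<le> s\<^sub>0" "finite {i. norm (x i) > s\<^sub>0}" "real (distr x s\<^sub>0) \<le> t"
    and "\<And>s. 0 \<le> s \<Longrightarrow> finite {i. norm (x i) > s} \<Longrightarrow> real (distr x s) \<le> t \<Longrightarrow> v \<le> s"
  shows "v \<le> mu t x"
  unfolding mu_def by (rule cInf_greatest) (use assms in auto)

lemma superlevel_tensor_eq:
  fixes a b :: "nat \<Rightarrow> complex" and s :: real
  assumes "0 \<le> s"
  shows "{i. norm (tensor a b i) > s} =
    (\<lambda>(l, k). (k, l)) ` (SIGMA l:{l. b l \<noteq> 0}. {k. norm (a k) * norm (b l) > s})"
  using assms by (force simp: tensor_def norm_mult)

lemma distr_tensor:
  fixes a b :: "nat \<Rightarrow> complex" and s :: real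
  assumes "0 \<le> s" "finite {l. b l \<noteq> 0}" "\<And>l. finite {k. norm (a k) * norm (b l) > s}"
  shows "finite {i. norm (tensor a b i) > s}"
    and "distr (tensor a b) s = (\<Sum>l | b l \<noteq> 0. card {k. norm (a k) * norm (b l) > s})"
proof -
  have "inj_on (\<lambda>(l, k). (k, l)) A" for A :: "(nat \<times> nat) set"
    by (auto simp: inj_on_def)
  then show "finite {i. norm (tensor a b i) > s}"
    and "distr (tensor a b) s = (\<Sum>l | b l \<noteq> 0. card {k. norm (a k) * norm (b l) > s})"
    unfolding distr_def superlevel_tensor_eq[OF assms(1)] using assms(2,3)
    by (simp_all add: card_image card_SigmaI)
qed

lemma norm_z: "norm (z k) = 1 / (real k + 1)"
  unfolding z_def norm_of_real by simp

lemma superlevel_harmonic_eq: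
  fixes a s :: real
  assumes "0 < s"
  shows "{k::nat. a / (real k + 1) > s} = {..< nat \<lceil>a / s - 1\<rceil>}"
proof -
  have less_nat_ceiling: "real k < c \<longleftrightarrow> k < nat \<lceil>c\<rceil>" for k and c :: real
    by (simp add: zless_nat_eq_int_zless less_ceiling_iff)
  have "a / (real k + 1) > s \<longleftrightarrow> real k < a / s - 1" for k
    using assms by (simp add: field_simps add_pos_nonneg)
  then show ?thesis
    unfolding less_nat_ceiling by auto
qed

lemma card_superlevel_harmonic_bounds:
  fixes a s :: real
  assumes "0 \<le> a" "0 < s"
  shows "a / s - 1 \<le> real (card {k::nat. a / (real k + 1) > s})"
    and "real (card {k::nat. a / (real k + 1) > s}) \<le> a / s"
proof -
  have ceiling_bounds: "c \<le> real (nat \<lceil>c\<rceil>)" "-1 \<le> c \<Longrightarrow> real (nat \<lceil>c\<rceil>) \<le> c + 1"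
    for c :: real
    by (cases "0 \<le> c"; linarith)+
  show "a / s - 1 \<le> real (card {k::nat. a / (real k + 1) > s})"
    and "real (card {k::nat. a / (real k + 1) > s}) \<le> a / s"
    unfolding superlevel_harmonic_eq[OF assms(2)] card_lessThan
    using ceiling_bounds[of "a / s - 1"] assms by auto
qed

lemma l1norm_finite_support:
  assumes "finite {k. \<alpha> k \<noteq> 0}"
  shows "l1norm \<alpha> = (\<Sum>k | \<alpha> k \<noteq> 0. norm (\<alpha> k))"
  unfolding l1norm_def by (rule suminf_finite) (use assms in auto)

lemma distr_tensor_z_bounds:
  fixes \<alpha> :: "nat \<Rightarrow> complex" and s :: real
  assumes fin: "finite {l. \<alpha> l \<noteq> 0}" and "0 < s"
  shows "finite {i. norm (tensor z \<alpha> i) > s}"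
    and "l1norm \<alpha> / s - real (card {l. \<alpha> l \<noteq> 0}) \<le> real (distr (tensor z \<alpha>) s)"
    and "real (distr (tensor z \<alpha>) s) \<le> l1norm \<alpha> / s"
proof -
  have row: "{k. norm (z k) * norm (\<alpha> l) > s} = {k. norm (\<alpha> l) / (real k + 1) > s}" for l
    by (simp add: norm_z)
  show "finite {i. norm (tensor z \<alpha> i) > s}"
    using distr_tensor(1)[OF _ fin] assms(2) by (simp add: row superlevel_harmonic_eq)
  have distr: "real (distr (tensor z \<alpha>) s) =
      (\<Sum>l | \<alpha> l \<noteq> 0. real (card {k. norm (\<alpha> l) / (real k + 1) > s}))"
    using distr_tensor(2)[OF _ fin] assms(2) by (simp add: row superlevel_harmonic_eq)
  have "(\<Sum>l | \<alpha> l \<noteq> 0. norm (\<alpha> l) / s - 1) \<le> real (distr (tensor z \<alpha>) s)"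
    unfolding distr using card_superlevel_harmonic_bounds(1) assms(2) by (intro sum_mono) simp
  then show "l1norm \<alpha> / s - real (card {l. \<alpha> l \<noteq> 0}) \<le> real (distr (tensor z \<alpha>) s)"
    by (simp add: l1norm_finite_support[OF fin] sum_subtractf sum_divide_distrib)
  have "real (distr (tensor z \<alpha>) s) \<le> (\<Sum>l | \<alpha> l \<noteq> 0. norm (\<alpha> l) / s)"
    unfolding distr using card_superlevel_harmonic_bounds(2) assms(2) by (intro sum_mono) simp
  then show "real (distr (tensor z \<alpha>) s) \<le> l1norm \<alpha> / s"
    by (simp add: l1norm_finite_support[OF fin] sum_divide_distrib)
qed

lemma infinite_positive_tensor_z:
  assumes "\<alpha> l \<noteq> 0"
  shows "infinite {i. norm (tensor z \<alpha> i) > 0}"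
proof -
  have "norm (tensor z \<alpha> (k, l)) > 0" for k
    unfolding tensor_def prod.case norm_mult norm_z using assms by simp
  then have "range (\<lambda>k. (k, l)) \<subseteq> {i. norm (tensor z \<alpha> i) > 0}"
    by auto
  moreover have "infinite (range (\<lambda>k::nat. (k, l)))"
    by (rule range_inj_infinite) (auto simp: inj_def)
  ultimately show ?thesis
    using finite_subset by blast
qed

lemma mu_tensor_z_bounds:
  fixes \<alpha> :: "nat \<Rightarrow> complex" and t :: real
  assumes fin: "finite {l. \<alpha> l \<noteq> 0}" and "0 < t"
  shows "l1norm \<alpha> / (t + real (card {l. \<alpha> l \<noteq> 0})) \<le> mu t (tensor z \<alpha>)"
    and "mu t (tensor z \<alpha>) \<le> l1norm \<alpha> / t"
proof -
  let ?A = "l1norm \<alpha>" and ?m = "real (card {l. \<alpha> l \<noteq> 0})"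
  have "0 \<le> ?A"
    unfolding l1norm_finite_support[OF fin] by (simp add: sum_nonneg)
  have admissible: "0 \<le> ?A / t \<and> finite {i. norm (tensor z \<alpha> i) > ?A / t} \<and>
      real (distr (tensor z \<alpha>) (?A / t)) \<le> t"
  proof (cases "?A = 0")
    case True
    then have "\<alpha> = (\<lambda>_. 0)"
      using fin by (auto simp: l1norm_finite_support sum_nonneg_eq_0_iff)
    then show ?thesis
      using \<open>0 < t\<close> by (simp add: tensor_def distr_def l1norm_def)
  next
    case False
    then have "0 < ?A / t" using \<open>0 \<le> ?A\<close> \<open>0 < t\<close> by simp
    moreover have "?A / (?A / t) = t"
      using False \<open>0 < t\<close> by simp
    ultimately show ?thesis
      using distr_tensor_z_bounds(1,3)[OF fin, of "?A / t"] by simp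
  qed
  then show "mu t (tensor z \<alpha>) \<le> ?A / t"
    by (blast intro: mu_le)
  show "?A / (t + ?m) \<le> mu t (tensor z \<alpha>)"
  proof (rule le_mu)
    show "0 \<le> ?A / t" "finite {i. norm (tensor z \<alpha> i) > ?A / t}"
      "real (distr (tensor z \<alpha>) (?A / t)) \<le> t"
      using admissible by blast+
  next
    fix s :: real
    assume s: "0 \<le> s" "finite {i. norm (tensor z \<alpha> i) > s}" "real (distr (tensor z \<alpha>) s) \<le> t"
    show "?A / (t + ?m) \<le> s"
    proof (cases "s = 0")
      case True
      then have "\<alpha> = (\<lambda>_. 0)"
        using s(2) infinite_positive_tensor_z by blast
      then show ?thesis
        using True by (simp add: l1norm_def)
    next
      case False
      with s(1) have "0 < s" by simp
      then have "?A / s \<le> t + ?m"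
        using distr_tensor_z_bounds(2)[OF fin \<open>0 < s\<close>] s(3) by linarith
      then show ?thesis
        using \<open>0 < s\<close> \<open>0 < t\<close> by (simp add: pos_divide_le_eq mult.commute add_pos_nonneg)
    qed
  qed
qed

theorem lemma4p6:
  fixes \<alpha> :: "nat \<Rightarrow> complex"
  assumes "finite {k. \<alpha> k \<noteq> 0}"
  shows "((\<lambda>t. t * mu t (tensor z \<alpha>)) \<longlongrightarrow> l1norm \<alpha>) at_top"
proof (rule tendsto_sandwich)
  let ?A = "l1norm \<alpha>" and ?m = "real (card {k. \<alpha> k \<noteq> 0})"
  show "\<forall>\<^sub>F t in at_top. ?A / (1 + ?m / t) \<le> t * mu t (tensor z \<alpha>)"
  proof (rule eventually_at_top_linorderI[of 1])
    fix t :: real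
    assume "1 \<le> t"
    then have "t * (?A / (t + ?m)) \<le> t * mu t (tensor z \<alpha>)"
      using mu_tensor_z_bounds(1)[OF assms] by (intro mult_left_mono) auto
    moreover have "?A / (1 + ?m / t) = t * (?A / (t + ?m))"
      using \<open>1 \<le> t\<close> by (simp add: field_simps)
    ultimately show "?A / (1 + ?m / t) \<le> t * mu t (tensor z \<alpha>)"
      by simp
  qed
  show "\<forall>\<^sub>F t in at_top. t * mu t (tensor z \<alpha>) \<le> ?A"
  proof (rule eventually_at_top_linorderI[of 1])
    fix t :: real
    assume "1 \<le> t"
    then have "t * mu t (tensor z \<alpha>) \<le> t * (?A / t)"
      using mu_tensor_z_bounds(2)[OF assms] by (intro mult_left_mono) auto
    with \<open>1 \<le> t\<close> show "t * mu t (tensor z \<alpha>) \<le> ?A"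
      by simp
  qed
  have "((\<lambda>t. ?A / (1 + ?m / t)) \<longlongrightarrow> ?A / (1 + 0)) at_top"
    by (intro tendsto_intros tendsto_divide_0[OF tendsto_const] filterlim_at_top_imp_at_infinity
        filterlim_ident) simp
  then show "((\<lambda>t. ?A / (1 + ?m / t)) \<longlongrightarrow> ?A) at_top"
    by simp
qed (rule tendsto_const)

end
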